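(* Suppose $\mathcal Q$ is vertically unbounded, $m=1$, and $v(p)>H$ (i.e. $v(p)>h$ for every $h\in H$). Then $p$ divides the binomial coefficient $\binom{\ell}{k}$ for every $k\in J$ and every $\ell\in B$ with $\ell>k$.
   Context: Let $(K,v)$ be a valued field and $p$ the characteristic exponent of its residue field ($p=1$ if the residue characteristic is $0$, otherwise $p$ is the residue characteristic); $v(p)$ denotes the value of $p\cdot1\in K$ (so $v(p)=\infty$ if $\mathrm{char}K=p>0$). Let $\Gamma$ be the divisible hull of $vK$, embedded in a divisible ordered abelian group $\Lambda$. Let $\nu\colon K[x]\to\Lambda\cup\{\infty\}$ be a valuation extending $v$ which is well-specified, i.e. it is not the case that simultaneously $\nu^{-1}(\infty)=0$, the value group of $\nu$ modulo $\Gamma$ is torsion, and the residue field of $\nu$ is algebraic over that of $v$. For $s\ge0$ let $\partial_s$ be the $s$-th Hasse–Schmidt derivative, defined by $f(x+y)=\sum_{s\ge0}(\partial_sf)y^s$. For nonconstant $f$ with $\nu(f)<\infty$ the level is $\epsilon_\nu(f)=\max\{(\nu(f)-\nu(\partial_sf))/s: s\ge1\}$; $\epsilon_\nu(a)=-\infty$ for $a\in K$. A monic $Q\in K[x]$ is a key polynomial for $\nu$ if $\epsilon_\nu(f)<\epsilon_\nu(Q)$ whenever $\deg f<\deg Q$. For monic $Q$, each $f$ has a unique $Q$-expansion $f=\sum_{i\ge0}f_{Q,i}Q^i$ with $\deg f_{Q,i}<\deg Q$; set $\nu_Q(f)=\min_i\nu(f_{Q,i}Q^i)$. Fix $m\ge1$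 such that the set $\Psi_m$ of key polynomials of degree $m$ for $\nu$ is nonempty and has no element of maximal $\nu$-value. Let $\mathcal Q\subseteq\Psi_m$ be well-ordered by $Q<R\iff\nu(Q)<\nu(R)$ and cofinal in $\Psi_m$ for $\nu$-values; write $\gamma_Q=\nu(Q)$. As in the paper, all values $\nu_Q(f)$ ($f\ne0$) lie in $\Gamma$. "For all $Q$ large enough" means for all $Q$ in a final segment of $\mathcal Q$. $f$ is $\mathcal Q$-stable if $\nu_Q(f)=\nu(f)$ for all $Q$ large enough, $\mathcal Q$-unstable otherwise. Assume unstable polynomials exist; limit key polynomials are the monic $\mathcal Q$-unstable polynomials of minimal degree, forming $\mathrm{KP}_\infty(\mathcal Q)$. Fix $F\in\mathrm{KP}_\infty(\mathcal Q)$, $D=\lfloor\deg F/m\rfloor$, $F=\sum_{\ell=0}^DF_{Q,\ell}Q^\ell$, $\beta_{Q,\ell}=\nu(F_{Q,\ell})\in\Gamma\cup\{\infty\}$. Let $\delta^L$ be the smallest initial segment of $\Gamma$ containing $\{\nu_Q(F):Q\in\mathcal Q\}$; write $x>\delta^L$ if $x\in(\Gamma\setminus\delta^L)\cup\{\infty\}$. Let $J$ be the set of $\ell\in\{0,\dots,D\}$ with $\beta_{Q,\ell}+\ell\gamma_Q>\delta^L$ for all $Q$ large enough, and $B=\{0,\dots,D\}\setminus J$. A cut $\eta=(\eta^L,\eta^R)$ of $\Gamma$ is vertically bounded if for every $x\in\eta^L$ and rational $q>1$ there is $y\in\eta^L$ with $q(y-x)>z-x$ for all $z\in\eta^L$;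 its invariance group is $\{h\in\Gamma:h+\eta^L=\eta^L\}$. Let $\gamma_{\mathcal Q}$ be the cut whose lower set is the smallest initial segment of $\Gamma$ containing $\{\gamma_Q\}$; $\mathcal Q$ is vertically unbounded if $\gamma_{\mathcal Q}$ is not vertically bounded; $H$ is the invariance group of $\gamma_{\mathcal Q}$. *)

theory Defs
  imports "HOL-Computational_Algebra.Polynomial" "HOL-Computational_Algebra.Primes"
          "HOL-Library.Extended"
begin

text \<open>Lambda is the ambient type 'g (a linearly ordered abelian group, assumed divisible
in the theorem); Lambda \<union> {infinity} is rendered as 'g extended with Pinf = infinity
(Minf is only used as the level -infinity of constants).  K is the field 'k, and the
valuation v on K is the restriction of nu to constant polynomials.\<close>

definition nsmul :: "nat \<Rightarrow> 'g::ab_group_add \<Rightarrow> 'g" where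
  "nsmul n g = (\<Sum>i<n. g)"

definition divisible_grp :: "'g::ab_group_add itself \<Rightarrow> bool" where
  "divisible_grp _ \<longleftrightarrow> (\<forall>(g::'g) n. 0 < n \<longrightarrow> (\<exists>h. nsmul n h = g))"

text \<open>g / n in a divisible torsion-free group\<close>
definition gdiv :: "'g::linordered_ab_group_add \<Rightarrow> nat \<Rightarrow> 'g" where
  "gdiv g n = (THE h. nsmul n h = g)"

definition is_valuation :: "('k::field poly \<Rightarrow> 'g::linordered_ab_group_add extended) \<Rightarrow> bool" where
  "is_valuation nu \<longleftrightarrow> nu 0 = Pinf \<and> nu 1 = Fin 0 \<and> (\<forall>f. nu f \<noteq> Minf)
     \<and> (\<forall>f g. nu (f * g) = nu f + nu g) \<and> (\<forall>f g. min (nu f) (nu g) \<le> nu (f + g))"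

definition valgrp_K :: "('k::field poly \<Rightarrow> 'g::linordered_ab_group_add extended) \<Rightarrow> 'g set" where
  "valgrp_K nu = {g. \<exists>a. a \<noteq> 0 \<and> nu [:a:] = Fin g}"

definition Gamma :: "('k::field poly \<Rightarrow> 'g::linordered_ab_group_add extended) \<Rightarrow> 'g set" where
  "Gamma nu = {g. \<exists>n>0. nsmul n g \<in> valgrp_K nu}"

text \<open>value group of nu (as a valuation on K(x) when its support is 0)\<close>
definition valgrp_nu :: "('k::field poly \<Rightarrow> 'g::linordered_ab_group_add extended) \<Rightarrow> 'g set" where
  "valgrp_nu nu = {a - b | a b. (\<exists>f. nu f = Fin a) \<and> (\<exists>h. nu h = Fin b)}"

text \<open>The residue field of nu (on K(x), support 0) is algebraic over that of v:
  every residue class of a quotient f/h with nu f = nu h (the nonzero residues) is a root of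
  a nonzero polynomial over the residue field of v, i.e. there are c_0..c_n in the valuation
  ring of v, not all in its maximal ideal, with nu(sum c_i (f/h)^i) > 0.\<close>
definition res_algebraic :: "('k::field poly \<Rightarrow> 'g::linordered_ab_group_add extended) \<Rightarrow> bool" where
  "res_algebraic nu \<longleftrightarrow> (\<forall>f h a. nu f = Fin a \<and> nu h = Fin a \<longrightarrow>
      (\<exists>n c. (\<forall>i\<le>n. Fin 0 \<le> nu [:c i:]) \<and> (\<exists>i\<le>n. nu [:c i:] = Fin 0) \<and>
             Fin (nsmul n a) < nu (\<Sum>i\<le>n. smult (c i) (f ^ i * h ^ (n - i)))))"

definition well_specified :: "('k::field poly \<Rightarrow> 'g::linordered_ab_group_add extended) \<Rightarrow> bool" where
  "well_specified nu \<longleftrightarrow> \<not> ((\<forall>f. nu f = Pinf \<longrightarrow> f = 0)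
       \<and> (\<forall>g\<in>valgrp_nu nu. \<exists>n>0. nsmul n g \<in> Gamma nu)
       \<and> res_algebraic nu)"

text \<open>characteristic exponent of the residue field of v\<close>
definition char_exp :: "('k::field poly \<Rightarrow> 'g::linordered_ab_group_add extended) \<Rightarrow> nat" where
  "char_exp nu = (if \<exists>q::nat. prime q \<and> Fin 0 < nu [:of_nat q:]
                  then (THE q::nat. prime q \<and> Fin 0 < nu [:of_nat q:]) else 1)"

text \<open>Hasse-Schmidt derivative: f(x+y) = sum_s (hasse s f) y^s\<close>
definition hasse :: "nat \<Rightarrow> 'k::field poly \<Rightarrow> 'k poly" where
  "hasse s f = coeff (pcompose (map_poly (\<lambda>a. [:a:]) f) [: [:0, 1:], 1 :]) s"

text \<open>level; for nonconstant f with nu f = infinity we use the value infinity\<close>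
definition level :: "('k::field poly \<Rightarrow> 'g::linordered_ab_group_add extended) \<Rightarrow> 'k poly \<Rightarrow> 'g extended" where
  "level nu f = (if degree f = 0 then Minf else if nu f = Pinf then Pinf else
     Max ((\<lambda>s. case (nu f, nu (hasse s f)) of (Fin a, Fin b) \<Rightarrow> Fin (gdiv (a - b) s) | _ \<Rightarrow> Minf)
          ` {1..degree f}))"

definition key_poly :: "('k::field poly \<Rightarrow> 'g::linordered_ab_group_add extended) \<Rightarrow> 'k poly \<Rightarrow> bool" where
  "key_poly nu Q \<longleftrightarrow> lead_coeff Q = 1 \<and> (\<forall>f. degree f < degree Q \<longrightarrow> level nu f < level nu Q)"

definition Psi :: "('k::field poly \<Rightarrow> 'g::linordered_ab_group_add extended) \<Rightarrow> nat \<Rightarrow> 'k poly set" where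
  "Psi nu m = {Q. key_poly nu Q \<and> degree Q = m}"

definition qcoeff :: "'k::field poly \<Rightarrow> 'k poly \<Rightarrow> nat \<Rightarrow> 'k poly" where
  "qcoeff Q f i = (f div Q ^ i) mod Q"

definition nuQ :: "('k::field poly \<Rightarrow> 'g::linordered_ab_group_add extended) \<Rightarrow> 'k poly \<Rightarrow> 'k poly \<Rightarrow> 'g extended" where
  "nuQ nu Q f = Min ((\<lambda>i. nu (qcoeff Q f i * Q ^ i)) ` {0..degree f})"

definition ev_large :: "('k::field poly \<Rightarrow> 'g::linordered_ab_group_add extended) \<Rightarrow> 'k poly set \<Rightarrow> ('k poly \<Rightarrow> bool) \<Rightarrow> bool" where
  "ev_large nu Qs P \<longleftrightarrow> (\<exists>Q0\<in>Qs. \<forall>Q\<in>Qs. nu Q0 \<le> nu Q \<longrightarrow> P Q)"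

definition stable :: "('k::field poly \<Rightarrow> 'g::linordered_ab_group_add extended) \<Rightarrow> 'k poly set \<Rightarrow> 'k poly \<Rightarrow> bool" where
  "stable nu Qs f \<longleftrightarrow> ev_large nu Qs (\<lambda>Q. nuQ nu Q f = nu f)"

definition KP_inf :: "('k::field poly \<Rightarrow> 'g::linordered_ab_group_add extended) \<Rightarrow> 'k poly set \<Rightarrow> 'k poly set" where
  "KP_inf nu Qs = {F. lead_coeff F = 1 \<and> \<not> stable nu Qs F \<and>
                     (\<forall>g. \<not> stable nu Qs g \<longrightarrow> degree F \<le> degree g)}"

definition deltaL :: "('k::field poly \<Rightarrow> 'g::linordered_ab_group_add extended) \<Rightarrow> 'k poly set \<Rightarrow> 'k poly \<Rightarrow> 'g set" where
  "deltaL nu Qs F = {g \<in> Gamma nu. \<exists>Q\<in>Qs. Fin g \<le> nuQ nu Q F}"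

text \<open>x > delta^L iff x in (Gamma - delta^L) \<union> {infinity}\<close>
definition above_cut :: "'g::linordered_ab_group_add set \<Rightarrow> 'g set \<Rightarrow> 'g extended \<Rightarrow> bool" where
  "above_cut G L x \<longleftrightarrow> x = Pinf \<or> (\<exists>g. x = Fin g \<and> g \<in> G \<and> g \<notin> L)"

definition Jset :: "('k::field poly \<Rightarrow> 'g::linordered_ab_group_add extended) \<Rightarrow> 'k poly set \<Rightarrow> nat \<Rightarrow> 'k poly \<Rightarrow> nat set" where
  "Jset nu Qs m F = {l \<in> {0..degree F div m}. ev_large nu Qs
      (\<lambda>Q. above_cut (Gamma nu) (deltaL nu Qs F) (nu (qcoeff Q F l) + (\<Sum>i<l. nu Q)))}"

definition Bset :: "('k::field poly \<Rightarrow> 'g::linordered_ab_group_add extended) \<Rightarrow> 'k poly set \<Rightarrow> nat \<Rightarrow> 'k poly \<Rightarrow> nat set" where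
  "Bset nu Qs m F = {0..degree F div m} - Jset nu Qs m F"

text \<open>vertically bounded cut of G with lower set L (q = a/b rational > 1)\<close>
definition vert_bounded :: "'g::linordered_ab_group_add set \<Rightarrow> bool" where
  "vert_bounded L \<longleftrightarrow> (\<forall>x\<in>L. \<forall>a b::nat. 0 < b \<and> b < a \<longrightarrow>
      (\<exists>y\<in>L. \<forall>z\<in>L. nsmul b (z - x) < nsmul a (y - x)))"

definition invariance_grp :: "'g::linordered_ab_group_add set \<Rightarrow> 'g set \<Rightarrow> 'g set" where
  "invariance_grp G L = {h \<in> G. (\<lambda>g. h + g) ` L = L}"

definition gammaL :: "('k::field poly \<Rightarrow> 'g::linordered_ab_group_add extended) \<Rightarrow> 'k poly set \<Rightarrow> 'g set" where
  "gammaL nu Qs = {g \<in> Gamma nu. \<exists>Q\<in>Qs. Fin g \<le> nu Q}"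

end

theory Submission
  imports Defs
begin

(* For m = 1 every Q in Qs is x - c_Q, so F_{Q,l} is the l-th Taylor coefficient of F at c_Q
   and the Q-expansion of the Hasse derivative \<partial>_k F has the coefficients C(j+k,k) F_{Q,j+k}.
   As deg \<partial>_k F < deg F, \<partial>_k F is stable; comparing two large Q shows that eventually
   \<nu>(F_{Q,k}) = \<nu>(\<partial>_k F) for k \<ge> 1, and J never contains 0.  Stability of \<partial>_k F then
   gives \<beta>_{Q,k} \<le> v(C(l,k)) + \<beta>_{Q,l} + (l-k)\<gamma>_Q.  Since v(p) > 0, a binomial coefficient
   not divisible by p has value 0, so \<beta>_{Q,k} + k\<gamma>_Q \<le> \<beta>_{Q,l} + l\<gamma>_Q for all large Q;
   for k \<in> J and l \<in> B the left side eventually lies above \<delta>^L while the right side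
   infinitely often does not. *)

section \<open>Hasse derivatives and expansions in powers of x - c\<close>

lemma coeff_hasse:
  "coeff (hasse k p) j = of_nat ((j + k) choose k) * coeff p (j + k)" for p :: "'k::field poly"
proof (induction p arbitrary: k j)
  case 0
  then show ?case by (simp add: hasse_def)
next
  case (pCons a p)
  have rec: "hasse k (pCons a p) =
      (if k = 0 then [:a:] else 0) + [:0, 1:] * hasse k p + (if k = 0 then 0 else hasse (k - 1) p)"
    using pCons.hyps
    by (cases k) (simp_all add: hasse_def map_poly_pCons pcompose_pCons algebra_simps)
  show ?case
  proof (cases k)
    case 0
    then show ?thesis using rec pCons.IH[of 0] by (cases j) simp_all
  next
    case (Suc k')
    then show ?thesis using rec pCons.IH[of k] pCons.IH[of k']
      by (cases j) (simp_all add: algebra_simps)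
  qed
qed

lemma hasse_0 [simp]: "hasse 0 p = p"
  by (rule poly_eqI) (simp add: coeff_hasse)

lemma hasse_add: "hasse k (p + q) = hasse k p + hasse k q"
  by (rule poly_eqI) (simp add: coeff_hasse algebra_simps)

lemma hasse_smult: "hasse k (smult a p) = smult a (hasse k p)"
  by (rule poly_eqI) (simp add: coeff_hasse algebra_simps)

lemma hasse_Suc_const [simp]: "hasse (Suc k) [:a:] = 0"
  by (rule poly_eqI) (simp add: coeff_hasse coeff_pCons split: nat.splits)

lemma hasse_Suc_pCons_0: "hasse (Suc k) (pCons 0 p) = pCons 0 (hasse (Suc k) p) + hasse k p"
proof (rule poly_eqI)
  fix j
  show "coeff (hasse (Suc k) (pCons 0 p)) j = coeff (pCons 0 (hasse (Suc k) p) + hasse k p) j"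
    by (cases j) (simp_all add: coeff_hasse algebra_simps)
qed

lemma hasse_pcompose_linear:
  "hasse k (pcompose g [:c, 1:]) = pcompose (hasse k g) [:c, 1:]"
proof (induction g arbitrary: k)
  case 0
  then show ?case by (simp add: hasse_def)
next
  case (pCons a g)
  let ?X = "[:c, 1:]" and ?h = "pcompose g [:c, 1:]"
  have shift: "pcompose (pCons a g) ?X = [:a:] + pCons 0 ?h + smult c ?h"
    by (simp add: pcompose_pCons algebra_simps)
  show ?case
  proof (cases k)
    case 0
    then show ?thesis by simp
  next
    case (Suc k')
    have "pCons a g = [:a:] + pCons 0 g" by simp
    then have "hasse k (pCons a g) = pCons 0 (hasse k g) + hasse k' g"
      by (metis Suc hasse_add hasse_Suc_const hasse_Suc_pCons_0 add_0)
    then show ?thesis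
      using pCons.IH
      by (simp add: Suc shift hasse_add hasse_smult hasse_Suc_pCons_0 pcompose_add pcompose_pCons
                    algebra_simps)
  qed
qed

lemma degree_hasse: "degree (hasse k p) \<le> degree p - k"
  by (rule degree_le) (auto simp: coeff_hasse coeff_eq_0)

lemma pcompose_power_left: "pcompose (p ^ n) q = pcompose p q ^ n"
  for p q :: "'a::comm_semiring_1 poly"
  by (induction n) (simp_all add: pcompose_mult pcompose_1)

lemma pcompose_linear_div_power:
  fixes g :: "'k::field poly"
  shows "pcompose g [:-c, 1:] div [:-c, 1:] ^ i = pcompose (poly_shift i g) [:-c, 1:]"
proof -
  let ?Q = "[:-c, 1:] :: 'k poly"
  have split: "g = poly_cutoff i g + monom 1 i * poly_shift i g"
    by (rule poly_eqI) (auto simp: coeff_poly_cutoff coeff_poly_shift coeff_monom_mult)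
  have "pcompose g ?Q = pcompose (poly_cutoff i g) ?Q + pcompose (poly_shift i g) ?Q * ?Q ^ i"
    by (subst split) (simp add: pcompose_add pcompose_mult monom_altdef pcompose_pCons
                                 mult.commute pcompose_power_left)
  moreover have "pcompose (poly_cutoff i g) ?Q div ?Q ^ i = 0"
  proof (cases "i = 0")
    case True
    have "poly_cutoff 0 g = 0" by (simp add: poly_eq_iff coeff_poly_cutoff)
    then show ?thesis using True by simp
  next
    case False
    have "degree (poly_cutoff i g) < i"
      using False by (intro le_less_trans[OF degree_le[of "i - 1"]]) (auto simp: coeff_poly_cutoff)
    then show ?thesis by (intro div_poly_less) (simp add: degree_pcompose degree_power_eq)
  qed
  ultimately show ?thesis by simp
qed

lemma qcoeff_pcompose_linear:
  fixes g :: "'k::field poly"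
  shows "qcoeff [:-c, 1:] (pcompose g [:-c, 1:]) i = [:coeff g i:]"
proof -
  obtain a h where h: "poly_shift i g = pCons a h" by (cases "poly_shift i g")
  have a: "a = coeff g i"
    using arg_cong[OF h, of "\<lambda>p. coeff p 0"] by (simp add: coeff_poly_shift)
  have "qcoeff [:-c, 1:] (pcompose g [:-c, 1:]) i =
      ([:a:] + pcompose h [:-c, 1:] * [:-c, 1:]) mod [:-c, 1:]"
    by (simp add: qcoeff_def pcompose_linear_div_power h pcompose_pCons mult.commute)
  also have "\<dots> = [:a:]"
    by (simp only: mod_mult_self1) (simp add: mod_poly_less)
  finally show ?thesis using a by simp
qed

lemma qcoeff_linear:
  fixes f :: "'k::field poly"
  shows "qcoeff [:-c, 1:] f i = [:coeff (pcompose f [:c, 1:]) i:]"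
proof -
  have "f = pcompose (pcompose f [:c, 1:]) [:-c, 1:]"
    by (simp add: pcompose_pCons flip: pcompose_assoc)
  then show ?thesis by (metis qcoeff_pcompose_linear)
qed

lemma sum_Fin: "(\<Sum>i\<in>A. Fin (f i)) = Fin (\<Sum>i\<in>A. f i)"
  by (induction A rule: infinite_finite_induct) (simp_all add: zero_extended_def)

lemma sum_lessThan_const_add:
  "(\<Sum>i<m + n. c) = (\<Sum>i<m. c) + (\<Sum>i<n. c)" for c :: "'a::comm_monoid_add" and m n :: nat
  by (induction n) (simp_all add: add.assoc)

lemma sum_lessThan_const_tie:
  fixes x y g h :: "'a::linordered_ab_group_add" and l l' :: nat
  assumes "x + (\<Sum>i<l. g) = y + (\<Sum>i<l'. g)" "x + (\<Sum>i<l. h) = y + (\<Sum>i<l'. h)" "l < l'"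
  shows "g = h"
proof -
  obtain d where d: "l' = l + d" "0 < d" using assms(3) less_imp_add_positive by blast
  have "(\<Sum>i<d. g) = (\<Sum>i<d. h)"
    using assms(1,2) unfolding d(1) sum_lessThan_const_add by (simp add: algebra_simps)
  then show ?thesis
    using sum_strict_mono[of "{..<d}" "\<lambda>_. g" "\<lambda>_. h"] sum_strict_mono[of "{..<d}" "\<lambda>_. h" "\<lambda>_. g"]
      d(2) by (cases g h rule: linorder_cases) auto
qed

section \<open>Valuations on K[x]\<close>

locale poly_valuation =
  fixes nu :: "'k::field poly \<Rightarrow> 'g::linordered_ab_group_add extended"
  assumes is_valuation: "is_valuation nu"
begin

lemma nu_0 [simp]: "nu 0 = Pinf"
  and nu_1 [simp]: "nu 1 = Fin 0"
  and nu_not_Minf [simp]: "nu f \<noteq> Minf"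
  and nu_mult: "nu (f * g) = nu f + nu g"
  and nu_add_ge: "min (nu f) (nu g) \<le> nu (f + g)"
  using is_valuation unfolding is_valuation_def by auto

lemma nu_const_1 [simp]: "nu [:1:] = Fin 0"
  by (simp flip: one_pCons)

lemma nu_minus_1: "nu (-1) = Fin 0"
proof -
  have "nu (-1) + nu (-1) = Fin 0" using nu_mult[of "-1" "-1"] by simp
  then show ?thesis by (cases "nu (-1)") auto
qed

lemma nu_uminus [simp]: "nu (- f) = nu f"
  using nu_mult[of "-1" f] by (simp add: nu_minus_1 flip: zero_extended_def)

lemma nu_diff_ge: "min (nu f) (nu g) \<le> nu (f - g)"
  using nu_add_ge[of f "- g"] by simp

lemma nu_add_eq_left:
  assumes "nu f < nu g"
  shows "nu (f + g) = nu f"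
proof (rule ccontr)
  assume "nu (f + g) \<noteq> nu f"
  with nu_add_ge[of f g] assms have "nu f < nu (f + g)" by simp
  moreover have "min (nu (f + g)) (nu g) \<le> nu f" using nu_diff_ge[of "f + g" g] by simp
  ultimately show False using assms by (simp add: min_def split: if_splits)
qed

lemma nu_sum_gt:
  assumes "finite A" "\<forall>i\<in>A. x < nu (t i)" "x < Pinf"
  shows "x < nu (sum t A)"
  using assms
proof (induction A rule: finite_induct)
  case (insert a A)
  then have "x < min (nu (t a)) (nu (sum t A))" by simp
  also have "\<dots> \<le> nu (t a + sum t A)" by (rule nu_add_ge)
  finally show ?case using insert by simp
qed simp

lemma nu_sum_eq_unique_min:
  assumes "finite A" "i0 \<in> A" "\<forall>i\<in>A - {i0}. nu (t i0) < nu (t i)" "nu (t i0) < Pinf"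
  shows "nu (sum t A) = nu (t i0)"
proof -
  have "nu (t i0) < nu (sum t (A - {i0}))"
    using assms by (intro nu_sum_gt) auto
  then show ?thesis using assms(1,2) by (simp add: sum.remove nu_add_eq_left)
qed

lemma nu_power: "nu (f ^ n) = (\<Sum>i<n. nu f)"
  by (induction n) (simp_all add: nu_mult add.commute flip: zero_extended_def)

lemma nu_const_mult: "nu [:a * b:] = nu [:a:] + nu [:b:]"
  using nu_mult[of "[:a:]" "[:b:]"] by (simp add: mult.commute)

lemma nu_const_power: "nu [:a ^ n:] = (\<Sum>i<n. nu [:a:])"
  by (induction n) (simp_all add: nu_const_mult add.commute zero_extended_def flip: one_pCons)

lemma nu_of_nat_ge_0: "Fin 0 \<le> nu [:of_nat n:]"
proof (induction n)
  case (Suc n)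
  have "min (nu [:1:]) (nu [:of_nat n:]) \<le> nu ([:1:] + [:of_nat n:])" by (rule nu_add_ge)
  then show ?case using Suc by (simp add: min_def split: if_splits)
qed simp

lemma not_coprime_if_nu_pos:
  assumes "Fin 0 < nu [:of_nat a:]" "Fin 0 < nu [:of_nat b:]"
  shows "\<not> coprime a b"
proof
  assume cop: "coprime a b"
  have "a \<noteq> 0"
    using cop assms(2) by (cases "a = 0") auto
  then obtain x y where "a * x = b * y + gcd a b" using bezout_nat by blast
  with cop have "[:of_nat (a * x):] - [:of_nat (b * y):] = [:1::'k:]" by simp
  moreover have "Fin 0 < nu [:of_nat (a * x):]" "Fin 0 < nu [:of_nat (b * y):]"
    using assms nu_of_nat_ge_0[of x] nu_of_nat_ge_0[of y]
    by (simp_all only: of_nat_mult nu_const_mult)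
       (auto simp: plus_case add_pos_nonneg split: extended.splits)
  ultimately show False
    using nu_diff_ge[of "[:of_nat (a * x):]" "[:of_nat (b * y):]"]
    by (simp add: min_def split: if_splits)
qed

lemma prime_char_exp:
  assumes "Fin 0 < nu [:of_nat (char_exp nu):]"
  shows "prime (char_exp nu)"
proof (cases "\<exists>q::nat. prime q \<and> Fin 0 < nu [:of_nat q:]")
  case True
  then obtain q where q: "prime q" "Fin 0 < nu [:of_nat q:]" by blast
  have "(THE q::nat. prime q \<and> Fin 0 < nu [:of_nat q:]) = q"
  proof (rule the_equality)
    fix r assume "prime r \<and> Fin 0 < nu [:of_nat r:]"
    then show "r = q" using q not_coprime_if_nu_pos primes_coprime by blast
  qed (use q in simp)
  then show ?thesis using True q(1) by (simp add: char_exp_def)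
next
  case False
  then have "char_exp nu = 1" unfolding char_exp_def by (rule if_not_P)
  with assms show ?thesis by simp
qed

lemma nu_of_nat_le_0_if_not_dvd:
  assumes "Fin 0 < nu [:of_nat (char_exp nu):]" "\<not> char_exp nu dvd n"
  shows "nu [:of_nat n:] \<le> Fin 0"
  using assms prime_char_exp[OF assms(1)] not_coprime_if_nu_pos prime_imp_coprime
  by (meson not_le)

end

section \<open>A limit key polynomial over degree-one key polynomials\<close>

locale degree_one_limit = poly_valuation nu
  for nu :: "'k::field poly \<Rightarrow> 'g::linordered_ab_group_add extended" +
  fixes Qs :: "'k poly set" and F :: "'k poly"
  assumes Qs_degree_one: "Qs \<subseteq> Psi nu 1"
    and Qs_no_max: "\<forall>Q\<in>Qs. \<exists>Q'\<in>Qs. nu Q < nu Q'"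
    and Qs_nonempty: "Qs \<noteq> {}"
    and F_limit: "F \<in> KP_inf nu Qs"
begin

definition large :: "'k poly filter" where
  "large = Abs_filter (ev_large nu Qs)"

lemma eventually_large: "eventually P large \<longleftrightarrow> ev_large nu Qs P"
proof -
  have "is_filter (ev_large nu Qs)"
  proof
    show "ev_large nu Qs (\<lambda>Q. True)"
      using Qs_nonempty by (auto simp: ev_large_def)
  next
    fix P R assume "ev_large nu Qs P" "ev_large nu Qs R"
    then obtain A B where "A \<in> Qs" "\<forall>Q\<in>Qs. nu A \<le> nu Q \<longrightarrow> P Q"
      and "B \<in> Qs" "\<forall>Q\<in>Qs. nu B \<le> nu Q \<longrightarrow> R Q"
      unfolding ev_large_def by blast
    then show "ev_large nu Qs (\<lambda>Q. P Q \<and> R Q)"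
      unfolding ev_large_def using le_cases[of "nu A" "nu B"] by (metis order_trans)
  next
    fix P R assume "\<forall>Q. P Q \<longrightarrow> R Q" "ev_large nu Qs P"
    then show "ev_large nu Qs R" unfolding ev_large_def by blast
  qed
  then show ?thesis unfolding large_def by (rule eventually_Abs_filter)
qed

lemma eventually_in_Qs: "eventually (\<lambda>Q. Q \<in> Qs) large"
  using Qs_nonempty by (auto simp: eventually_large ev_large_def)

lemma eventually_largeE:
  assumes "eventually P large"
  obtains T where "T \<in> Qs" "\<And>Q. Q \<in> Qs \<Longrightarrow> nu T \<le> nu Q \<Longrightarrow> P Q"
  using assms by (auto simp: eventually_large ev_large_def)

lemma eventually_large_above:
  assumes "T \<in> Qs" "\<And>Q. Q \<in> Qs \<Longrightarrow> nu T < nu Q \<Longrightarrow> P Q"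
  shows "eventually P large"
proof -
  obtain T' where "T' \<in> Qs" "nu T < nu T'" using Qs_no_max assms(1) by blast
  then show ?thesis
    using assms(2) unfolding eventually_large ev_large_def by (blast intro: less_le_trans)
qed

definition center :: "'k poly \<Rightarrow> 'k" where
  "center Q = - coeff Q 0"

lemma Qs_linear:
  assumes "Q \<in> Qs"
  shows "Q = [:- center Q, 1:]"
proof -
  have "degree Q = 1" "lead_coeff Q = 1"
    using assms Qs_degree_one by (auto simp: Psi_def key_poly_def)
  then show ?thesis
    by (auto simp: poly_eq_iff center_def coeff_pCons coeff_eq_0 split: nat.splits)
qed

lemma qcoeff_Qs: "Q \<in> Qs \<Longrightarrow> qcoeff Q f l = [:coeff (pcompose f [:center Q, 1:]) l:]"
  by (subst Qs_linear) (simp_all add: qcoeff_linear)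

lemma nu_Qs_Fin:
  assumes "Q \<in> Qs"
  obtains \<gamma> where "nu Q = Fin \<gamma>"
proof -
  obtain Q' where "nu Q < nu Q'" using Qs_no_max assms by blast
  then show ?thesis using that by (cases "nu Q") auto
qed

lemma nu_center_diff:
  assumes "Q \<in> Qs" "Q' \<in> Qs" "nu Q < nu Q'"
  shows "nu [:center Q' - center Q:] = nu Q"
proof -
  have "[:center Q' - center Q:] = Q + - Q'"
    by (subst (2) Qs_linear[OF assms(1)], subst Qs_linear[OF assms(2)]) simp
  then show ?thesis using nu_add_eq_left[of Q "- Q'"] assms(3) by simp
qed

lemma nuQ_le:
  assumes "Q \<in> Qs"
  shows "nuQ nu Q g \<le> nu (qcoeff Q g j * Q ^ j)"
proof (cases "j \<le> degree g")
  case True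
  then show ?thesis unfolding nuQ_def by (intro Min_le) auto
next
  case False
  then have "degree g < degree (Q ^ j)"
    using Qs_linear[OF assms] by (metis degree_linear_power not_le)
  then show ?thesis by (simp add: qcoeff_def div_poly_less)
qed

lemma nuQ_attained: "\<exists>j\<le>degree g. nuQ nu Q g = nu (qcoeff Q g j * Q ^ j)"
proof -
  have "nuQ nu Q g \<in> (\<lambda>i. nu (qcoeff Q g i * Q ^ i)) ` {0..degree g}"
    unfolding nuQ_def by (rule Min_in) auto
  then show ?thesis by auto
qed

lemma eventually_nuQ_eq_nu:
  assumes "degree g < degree F"
  shows "eventually (\<lambda>Q. nuQ nu Q g = nu g) large"
proof -
  have "stable nu Qs g"
    using F_limit assms by (auto simp: KP_inf_def not_le)
  then show ?thesis by (simp add: stable_def eventually_large)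
qed

definition F_coeff :: "'k poly \<Rightarrow> nat \<Rightarrow> 'k" where
  "F_coeff Q l = coeff (pcompose F [:center Q, 1:]) l"

(* \<beta>_{Q,l} + l \<gamma>_Q, written as in the definition of Jset *)
abbreviation F_term :: "'k poly \<Rightarrow> nat \<Rightarrow> 'g extended" where
  "F_term Q l \<equiv> nu (qcoeff Q F l) + (\<Sum>i<l. nu Q)"

abbreviation above_deltaL :: "'g extended \<Rightarrow> bool" where
  "above_deltaL x \<equiv> above_cut (Gamma nu) (deltaL nu Qs F) x"

lemma qcoeff_F: "Q \<in> Qs \<Longrightarrow> qcoeff Q F l = [:F_coeff Q l:]"
  by (simp add: qcoeff_Qs F_coeff_def)

lemma F_term_eq: "Q \<in> Qs \<Longrightarrow> F_term Q l = nu [:F_coeff Q l:] + (\<Sum>i<l. nu Q)"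
  by (simp add: qcoeff_F)

lemma nu_qcoeff_F_times_power: "nu (qcoeff Q F l * Q ^ l) = F_term Q l"
  by (simp add: nu_mult nu_power)

lemma qcoeff_hasse_F:
  "Q \<in> Qs \<Longrightarrow> qcoeff Q (hasse k F) j = [:of_nat ((j + k) choose k) * F_coeff Q (j + k):]"
  by (simp add: qcoeff_Qs F_coeff_def coeff_hasse flip: hasse_pcompose_linear)

lemma nu_qcoeff_hasse_F_times_power:
  "Q \<in> Qs \<Longrightarrow> nu (qcoeff Q (hasse k F) j * Q ^ j) =
    nu [:of_nat ((j + k) choose k):] + nu [:F_coeff Q (j + k):] + (\<Sum>i<j. nu Q)"
  by (simp only: qcoeff_hasse_F nu_mult nu_power nu_const_mult)

lemma F_coeff_degree: "Q \<in> Qs \<Longrightarrow> F_coeff Q (degree F) = 1"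
  using F_limit lead_coeff_comp[of "[:center Q, 1:]" F]
  by (simp add: F_coeff_def KP_inf_def degree_pcompose)

lemma F_coeff_0_expansion:
  "F_coeff Q' 0 = (\<Sum>l\<le>degree F. F_coeff Q l * (center Q' - center Q) ^ l)"
proof -
  have "F_coeff Q' 0 = poly (pcompose F [:center Q, 1:]) (center Q' - center Q)"
    by (simp add: F_coeff_def poly_pcompose)
  then show ?thesis by (simp add: poly_altdef degree_pcompose F_coeff_def)
qed

lemma nu_F_coeff_shift:
  assumes "Q \<in> Qs" "Q' \<in> Qs" "nu Q < nu Q'"
  shows "nu [:F_coeff Q l * (center Q' - center Q) ^ l:] = F_term Q l"
  using assms by (simp add: nu_const_mult nu_const_power nu_center_diff F_term_eq)

lemma F_term_in_Gamma:
  assumes "Q \<in> Qs" "F_term Q l = Fin g"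
  shows "g \<in> Gamma nu"
proof -
  obtain Q' where Q': "Q' \<in> Qs" "nu Q < nu Q'" using Qs_no_max assms(1) by blast
  let ?z = "F_coeff Q l * (center Q' - center Q) ^ l"
  have "nu [:?z:] = Fin g" using nu_F_coeff_shift[OF assms(1) Q'] assms(2) by simp
  then have "[:?z:] \<noteq> 0" by (metis extended.distinct(1) nu_0)
  with \<open>nu [:?z:] = Fin g\<close> have "g \<in> valgrp_K nu"
    unfolding valgrp_K_def by (intro CollectI exI[of _ ?z]) simp
  then show ?thesis unfolding Gamma_def by (intro CollectI exI[of _ 1]) (simp add: nsmul_def)
qed

lemma above_cut_gt_deltaL:
  assumes "above_deltaL x" "g \<in> deltaL nu Qs F"
  shows "Fin g < x"
proof (rule ccontr)
  assume "\<not> Fin g < x"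
  with assms(1) obtain g' where g': "x = Fin g'" "g' \<in> Gamma nu" "g' \<notin> deltaL nu Qs F" "g' \<le> g"
    unfolding above_cut_def by auto
  from assms(2) obtain Q where Q: "Q \<in> Qs" "Fin g \<le> nuQ nu Q F" unfolding deltaL_def by blast
  have "Fin g' \<le> nuQ nu Q F" using g'(4) Q(2) order_trans[of "Fin g'" "Fin g"] by simp
  with Q(1) g'(2) have "g' \<in> deltaL nu Qs F" unfolding deltaL_def by blast
  with g'(3) show False by contradiction
qed

lemma nuQ_F_in_deltaL:
  assumes "Q \<in> Qs"
  obtains n where "nuQ nu Q F = Fin n" "n \<in> deltaL nu Qs F"
proof -
  obtain l where l: "nuQ nu Q F = F_term Q l"
    using nuQ_attained[where Q=Q and g=F] by (auto simp: nu_qcoeff_F_times_power)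
  obtain \<gamma> where "nu Q = Fin \<gamma>" using nu_Qs_Fin assms by blast
  then have "F_term Q (degree F) \<noteq> Pinf"
    using F_coeff_degree[OF assms] unfolding F_term_eq[OF assms] by (simp add: sum_Fin)
  then have "nuQ nu Q F \<noteq> Pinf"
    using nuQ_le[OF assms, of F "degree F"] by (auto simp: nu_qcoeff_F_times_power)
  moreover have "nuQ nu Q F \<noteq> Minf" using l by (simp add: nu_qcoeff_F_times_power[symmetric])
  ultimately obtain n where n: "nuQ nu Q F = Fin n" by (cases "nuQ nu Q F") auto
  then have "n \<in> Gamma nu" using F_term_in_Gamma[OF assms] l by simp
  with n assms have "n \<in> deltaL nu Qs F" unfolding deltaL_def by (auto intro!: bexI[of _ Q])
  with n show ?thesis using that by blast
qed

lemma sum_nu_strict_mono: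
  fixes j :: nat
  assumes "T \<in> Qs" "Q \<in> Qs" "nu T < nu Q" "0 < j" "A \<noteq> Minf" "A + (\<Sum>i<j. nu Q) \<noteq> Pinf"
  shows "A + (\<Sum>i<j. nu T) < A + (\<Sum>i<j. nu Q)"
proof -
  obtain \<gamma>T \<gamma>Q where \<gamma>: "nu T = Fin \<gamma>T" "nu Q = Fin \<gamma>Q" using nu_Qs_Fin assms(1,2) by metis
  with assms(3,4) have "(\<Sum>i<j. \<gamma>T) < (\<Sum>i<j. \<gamma>Q)" by (intro sum_strict_mono) auto
  with \<gamma> assms(5,6) show ?thesis by (cases A) (auto simp: sum_Fin)
qed

(* Otherwise the minimum of the Q-expansion of \<partial>_k F is a term A + j \<gamma>_Q with j > 0, and the
   same term for T is A + j \<gamma>_T, strictly smaller than \<nu>(\<partial>_k F), contradicting stability at T. *)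
lemma nu_F_coeff_eq_hasse_if_stable:
  fixes k :: nat and G :: "'k poly"
  defines "G \<equiv> hasse k F"
  assumes T: "T \<in> Qs" and Q: "Q \<in> Qs" "nu T < nu Q"
    and stable: "nuQ nu T G = nu G" "nuQ nu Q G = nu G"
    and higher: "\<And>l R. l \<in> {k<..degree F} \<Longrightarrow> R \<in> {T, Q} \<Longrightarrow> nu [:F_coeff R l:] = nu (hasse l F)"
  shows "nu [:F_coeff Q k:] = nu G"
proof -
  have "nu G \<le> nu [:F_coeff Q k:]"
    using nuQ_le[OF Q(1), of G 0] stable(2) by (simp add: G_def qcoeff_hasse_F[OF Q(1)])
  moreover have "\<not> nu G < nu [:F_coeff Q k:]"
  proof
    assume less_coeff: "nu G < nu [:F_coeff Q k:]"
    obtain j where j: "j \<le> degree G" "nu G = nu (qcoeff Q G j * Q ^ j)"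
      using nuQ_attained[where Q=Q and g=G] stable(2) by auto
    have "j \<noteq> 0"
    proof
      assume "j = 0"
      with j(2) less_coeff show False by (simp add: G_def qcoeff_hasse_F[OF Q(1)])
    qed
    with j(1) degree_hasse[of k F] have jk: "j + k \<in> {k<..degree F}" by (auto simp: G_def)
    define A where "A = nu [:of_nat ((j + k) choose k):] + nu (hasse (j + k) F)"
    have G_Q: "nu G = A + (\<Sum>i<j. nu Q)"
      using j(2) higher[OF jk] by (simp add: G_def nu_qcoeff_hasse_F_times_power[OF Q(1)] A_def)
    have "nu G \<le> A + (\<Sum>i<j. nu T)"
      using nuQ_le[OF T, of G j] stable(1) higher[OF jk]
      by (simp add: G_def nu_qcoeff_hasse_F_times_power[OF T] A_def)
    moreover have "A + (\<Sum>i<j. nu T) < A + (\<Sum>i<j. nu Q)"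
      using less_coeff G_Q \<open>j \<noteq> 0\<close>
      by (intro sum_nu_strict_mono[OF T Q]) (auto simp: A_def plus_case split: extended.splits)
    ultimately show False using G_Q by simp
  qed
  ultimately show ?thesis by simp
qed

lemma eventually_nu_F_coeff_eq_hasse:
  assumes "1 \<le> k" "k \<le> degree F"
  shows "eventually (\<lambda>Q. nu [:F_coeff Q k:] = nu (hasse k F)) large"
  using assms
proof (induction "degree F - k" arbitrary: k rule: less_induct)
  case less
  have "eventually (\<lambda>Q. \<forall>l\<in>{k<..degree F}. nu [:F_coeff Q l:] = nu (hasse l F)) large"
    using less by (intro eventually_ball_finite) auto
  moreover have "eventually (\<lambda>Q. nuQ nu Q (hasse k F) = nu (hasse k F)) large"
    using degree_hasse[of k F] less.prems by (intro eventually_nuQ_eq_nu) linarith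
  ultimately obtain T where T: "T \<in> Qs" and T_large: "\<And>Q. Q \<in> Qs \<Longrightarrow> nu T \<le> nu Q \<Longrightarrow>
      (\<forall>l\<in>{k<..degree F}. nu [:F_coeff Q l:] = nu (hasse l F)) \<and>
      nuQ nu Q (hasse k F) = nu (hasse k F)"
    by (auto elim: eventually_largeE[OF eventually_conj])
  show ?case
  proof (rule eventually_large_above[OF T])
    fix Q assume Q: "Q \<in> Qs" "nu T < nu Q"
    then show "nu [:F_coeff Q k:] = nu (hasse k F)"
      using T_large[OF T] T_large[OF Q(1)] T
      by (intro nu_F_coeff_eq_hasse_if_stable[OF T Q]) (auto simp: less_imp_le)
  qed
qed

lemma eventually_no_tie:
  fixes l l' :: nat
  assumes "l \<noteq> l'"
  shows "eventually (\<lambda>Q. Fin b + (\<Sum>i<l. nu Q) \<noteq> b' + (\<Sum>i<l'. nu Q)) large"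
proof (cases "\<exists>T\<in>Qs. Fin b + (\<Sum>i<l. nu T) = b' + (\<Sum>i<l'. nu T)")
  case False
  show ?thesis by (rule eventually_mono[OF eventually_in_Qs]) (use False in blast)
next
  case True
  then obtain T where T: "T \<in> Qs" "Fin b + (\<Sum>i<l. nu T) = b' + (\<Sum>i<l'. nu T)" by blast
  obtain \<gamma>T where \<gamma>T: "nu T = Fin \<gamma>T" using nu_Qs_Fin T(1) by blast
  then obtain c where c: "b' = Fin c" using T(2) by (cases b') (auto simp: sum_Fin)
  show ?thesis
  proof (rule eventually_large_above[OF T(1)], rule notI)
    fix Q assume Q: "Q \<in> Qs" "nu T < nu Q"
      and tie: "Fin b + (\<Sum>i<l. nu Q) = b' + (\<Sum>i<l'. nu Q)"
    obtain \<gamma>Q where \<gamma>Q: "nu Q = Fin \<gamma>Q" using nu_Qs_Fin Q(1) by blast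
    have ties: "b + (\<Sum>i<l. \<gamma>T) = c + (\<Sum>i<l'. \<gamma>T)" "b + (\<Sum>i<l. \<gamma>Q) = c + (\<Sum>i<l'. \<gamma>Q)"
      using T(2) tie by (simp_all add: \<gamma>T \<gamma>Q c sum_Fin)
    have "\<gamma>T = \<gamma>Q"
    proof (cases "l < l'")
      case True
      with ties show ?thesis by (rule sum_lessThan_const_tie)
    next
      case False
      with assms have "l' < l" by simp
      with ties[symmetric] show ?thesis by (rule sum_lessThan_const_tie)
    qed
    then show False using Q(2) \<gamma>T \<gamma>Q by simp
  qed
qed

lemma eventually_F_terms_distinct:
  "eventually (\<lambda>Q. \<forall>l\<in>{1..degree F}. \<forall>l'\<in>{1..degree F}.
     l \<noteq> l' \<longrightarrow> F_term Q l \<noteq> Pinf \<longrightarrow> F_term Q l \<noteq> F_term Q l') large"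
proof -
  let ?L = "{1..degree F}"
  have "eventually (\<lambda>Q. \<forall>l\<in>?L. nu [:F_coeff Q l:] = nu (hasse l F)) large"
    by (intro eventually_ball_finite) (auto intro: eventually_nu_F_coeff_eq_hasse)
  moreover have "eventually (\<lambda>Q. \<forall>l\<in>?L. \<forall>l'\<in>?L. l \<noteq> l' \<longrightarrow> nu (hasse l F) \<noteq> Pinf \<longrightarrow>
      nu (hasse l F) + (\<Sum>i<l. nu Q) \<noteq> nu (hasse l' F) + (\<Sum>i<l'. nu Q)) large"
  proof (intro eventually_ball_finite finite_atLeastAtMost ballI)
    fix l l'
    show "eventually (\<lambda>Q. l \<noteq> l' \<longrightarrow> nu (hasse l F) \<noteq> Pinf \<longrightarrow>
        nu (hasse l F) + (\<Sum>i<l. nu Q) \<noteq> nu (hasse l' F) + (\<Sum>i<l'. nu Q)) large"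
    proof (cases "l \<noteq> l' \<and> nu (hasse l F) \<noteq> Pinf")
      case True
      then obtain b where "nu (hasse l F) = Fin b" by (cases "nu (hasse l F)") auto
      then show ?thesis
        using eventually_no_tie[of l l' b "nu (hasse l' F)"] True by simp
    qed auto
  qed
  ultimately show ?thesis
    using eventually_in_Qs
  proof eventually_elim
    case (elim Q)
    show ?case
    proof (intro ballI impI)
      fix l l' assume l: "l \<in> ?L" "l' \<in> ?L" "l \<noteq> l'" and "F_term Q l \<noteq> Pinf"
      then have "nu (hasse l F) + (\<Sum>i<l. nu Q) \<noteq> Pinf" using elim by (simp add: F_term_eq)
      then have "nu (hasse l F) \<noteq> Pinf" by (auto simp: plus_case split: extended.splits)
      then show "F_term Q l \<noteq> F_term Q l'" using elim l by (simp add: F_term_eq)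
    qed
  qed
qed

lemma nuQ_F_unique_min:
  assumes T: "T \<in> Qs" and above_0: "above_deltaL (F_term T 0)"
    and distinct: "\<forall>l\<in>{1..degree F}. \<forall>l'\<in>{1..degree F}.
       l \<noteq> l' \<longrightarrow> F_term T l \<noteq> Pinf \<longrightarrow> F_term T l \<noteq> F_term T l'"
  obtains l0 n where "l0 \<le> degree F" "F_term T l0 = Fin n" "n \<in> deltaL nu Qs F"
    "\<forall>l\<in>{..degree F} - {l0}. Fin n < F_term T l"
proof -
  obtain n where n: "nuQ nu T F = Fin n" "n \<in> deltaL nu Qs F" using nuQ_F_in_deltaL[OF T] .
  obtain l0 where l0: "l0 \<le> degree F" "F_term T l0 = Fin n"
    using nuQ_attained[where Q=T and g=F] n(1) by (auto simp: nu_qcoeff_F_times_power)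
  have le: "Fin n \<le> F_term T l" for l
    using nuQ_le[OF T, of F l] n(1) by (simp add: nu_qcoeff_F_times_power)
  have gt_0: "Fin n < F_term T 0" using above_cut_gt_deltaL[OF above_0 n(2)] .
  have "l0 \<noteq> 0"
  proof
    assume "l0 = 0"
    with gt_0 l0(2) show False by simp
  qed
  have "Fin n < F_term T l" if "l \<in> {..degree F} - {l0}" for l
  proof (cases "l = 0")
    case False
    then have "l0 \<in> {1..degree F}" "l \<in> {1..degree F}" "l0 \<noteq> l"
      using that l0(1) \<open>l0 \<noteq> 0\<close> by auto
    with l0(2) have "F_term T l0 \<noteq> F_term T l"
      using distinct[rule_format, of l0 l] by simp
    then show ?thesis using le[of l] l0(2) by simp
  qed (use gt_0 in simp)
  then show ?thesis using that l0 n(2) by blast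
qed

(* For large T the minimum \<nu>_T(F) \<in> \<delta>^L is attained at a unique index l0 \<ge> 1; expanding
   F_{Q,0} = F(c_Q) around c_T for a larger Q then gives \<nu>(F_{Q,0}) = \<nu>_T(F), so 0 \<notin> J. *)
lemma zero_not_in_Jset: "0 \<notin> Jset nu Qs 1 F"
proof
  assume "0 \<in> Jset nu Qs 1 F"
  then have "eventually (\<lambda>Q. above_deltaL (F_term Q 0)) large"
    by (simp add: Jset_def eventually_large)
  then obtain T where T: "T \<in> Qs" and T_large: "\<And>Q. Q \<in> Qs \<Longrightarrow> nu T \<le> nu Q \<Longrightarrow>
      above_deltaL (F_term Q 0) \<and> (\<forall>l\<in>{1..degree F}. \<forall>l'\<in>{1..degree F}.
        l \<noteq> l' \<longrightarrow> F_term Q l \<noteq> Pinf \<longrightarrow> F_term Q l \<noteq> F_term Q l')"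
    by (auto elim: eventually_largeE[OF eventually_conj[OF _ eventually_F_terms_distinct]])
  obtain l0 n where l0: "l0 \<le> degree F" "F_term T l0 = Fin n" "n \<in> deltaL nu Qs F"
    and min: "\<forall>l\<in>{..degree F} - {l0}. Fin n < F_term T l"
    using nuQ_F_unique_min[OF T] T_large[OF T] by blast
  obtain Q where Q: "Q \<in> Qs" "nu T < nu Q" using Qs_no_max T by blast
  let ?t = "\<lambda>l. F_coeff T l * (center Q - center T) ^ l"
  have "nu [:F_coeff Q 0:] = nu (\<Sum>l\<le>degree F. [:?t l:])"
    by (simp add: F_coeff_0_expansion[of Q T] monom_sum[of _ _ 0, unfolded monom_0])
  also have "\<dots> = nu [:?t l0:]"
    using l0 min by (intro nu_sum_eq_unique_min) (simp_all add: nu_F_coeff_shift[OF T Q])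
  also have "\<dots> = Fin n" using l0(2) by (simp add: nu_F_coeff_shift[OF T Q])
  finally have "F_term Q 0 = Fin n" by (simp add: qcoeff_F[OF Q(1)])
  with T_large[OF Q(1)] Q(2) have "above_deltaL (Fin n)" by simp
  from above_cut_gt_deltaL[OF this l0(3)] show False by simp
qed

lemma F_term_le_if_binomial_nonpos:
  assumes Q: "Q \<in> Qs" and "k < l"
    and stable: "nuQ nu Q (hasse k F) = nu (hasse k F)"
    and coeff_k: "nu [:F_coeff Q k:] = nu (hasse k F)"
    and binomial: "nu [:of_nat (l choose k):] \<le> Fin 0"
  shows "F_term Q k \<le> F_term Q l"
proof -
  have lk: "(l - k) + k = l" using \<open>k < l\<close> by simp
  have "nu [:F_coeff Q k:] \<le> nu (qcoeff Q (hasse k F) (l - k) * Q ^ (l - k))"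
    using nuQ_le[OF Q] stable coeff_k by metis
  also have "\<dots> = nu [:of_nat (l choose k):] + (nu [:F_coeff Q l:] + (\<Sum>i<l - k. nu Q))"
    by (simp add: nu_qcoeff_hasse_F_times_power[OF Q] lk add.assoc)
  also have "\<dots> \<le> nu [:F_coeff Q l:] + (\<Sum>i<l - k. nu Q)"
    using add_right_mono[OF binomial] by (simp add: zero_extended_def[symmetric])
  finally have "F_term Q k \<le> nu [:F_coeff Q l:] + (\<Sum>i<l - k. nu Q) + (\<Sum>i<k. nu Q)"
    by (simp add: F_term_eq[OF Q] add_right_mono)
  also have "\<dots> = F_term Q l"
    using sum_lessThan_const_add[where m="l - k" and n=k and c="nu Q"]
    by (simp add: lk qcoeff_F[OF Q] add.assoc)
  finally show ?thesis .
qed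

lemma char_exp_dvd_binomial:
  assumes p_pos: "Fin 0 < nu [:of_nat (char_exp nu):]"
    and k: "k \<in> Jset nu Qs 1 F" and l: "l \<in> Bset nu Qs 1 F" and "k < l"
  shows "char_exp nu dvd (l choose k)"
proof (rule ccontr)
  assume "\<not> char_exp nu dvd (l choose k)"
  with p_pos have binomial: "nu [:of_nat (l choose k):] \<le> Fin 0"
    by (rule nu_of_nat_le_0_if_not_dvd)
  have "k \<noteq> 0" using k zero_not_in_Jset by (metis (full_types))
  with k have "1 \<le> k" "k \<le> degree F"
    and above_k: "eventually (\<lambda>Q. above_deltaL (F_term Q k)) large"
    by (auto simp: Jset_def eventually_large)
  have "frequently (\<lambda>Q. \<not> above_deltaL (F_term Q l)) large"
    using l by (simp add: Bset_def Jset_def eventually_large frequently_def)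
  moreover have "eventually (\<lambda>Q. Q \<in> Qs \<and> above_deltaL (F_term Q k) \<and>
      nuQ nu Q (hasse k F) = nu (hasse k F) \<and> nu [:F_coeff Q k:] = nu (hasse k F)) large"
    using degree_hasse[of k F] \<open>1 \<le> k\<close> \<open>k \<le> degree F\<close>
    by (intro eventually_conj eventually_in_Qs above_k eventually_nuQ_eq_nu
        eventually_nu_F_coeff_eq_hasse) auto
  ultimately obtain Q where Q: "Q \<in> Qs" "\<not> above_deltaL (F_term Q l)" "above_deltaL (F_term Q k)"
    and stable: "nuQ nu Q (hasse k F) = nu (hasse k F)"
    and coeff_k: "nu [:F_coeff Q k:] = nu (hasse k F)"
    by (auto elim!: frequently_eventually_frequently[THEN frequently_ex, elim_format])
  have "F_term Q l \<noteq> Pinf" using Q(2) by (auto simp: above_cut_def)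
  moreover have "F_term Q l \<noteq> Minf" by (simp flip: nu_qcoeff_F_times_power)
  ultimately obtain g where g: "F_term Q l = Fin g" by (cases "F_term Q l") auto
  with Q(1,2) have "g \<in> deltaL nu Qs F" using F_term_in_Gamma by (auto simp: above_cut_def)
  with Q(3) have "Fin g < F_term Q k" by (rule above_cut_gt_deltaL)
  moreover have "F_term Q k \<le> F_term Q l"
    using F_term_le_if_binomial_nonpos[OF Q(1) \<open>k < l\<close> stable coeff_k binomial] .
  ultimately show False using g by simp
qed

end

theorem mainTheorem19:
  fixes nu :: "'k::field poly \<Rightarrow> 'g::linordered_ab_group_add extended"
    and Qs :: "'k poly set" and m :: nat and F :: "'k poly"
  assumes div: "divisible_grp TYPE('g)"
    and val: "is_valuation nu"
    and ws: "well_specified nu"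
    and m1: "m \<ge> 1"
    and Psi_ne: "Psi nu m \<noteq> {}"
    and Psi_nomax: "\<forall>P\<in>Psi nu m. \<exists>P'\<in>Psi nu m. nu P < nu P'"
    and Qs_sub: "Qs \<subseteq> Psi nu m"
    and Qs_inj: "inj_on nu Qs"
    and Qs_wo: "\<forall>S\<subseteq>Qs. S \<noteq> {} \<longrightarrow> (\<exists>Q\<in>S. \<forall>R\<in>S. nu Q \<le> nu R)"
    and Qs_cof: "\<forall>P\<in>Psi nu m. \<exists>Q\<in>Qs. nu P \<le> nu Q"
    and unst: "\<exists>f. \<not> stable nu Qs f"
    and F: "F \<in> KP_inf nu Qs"
    and vunb: "\<not> vert_bounded (gammaL nu Qs)"
    and m_eq: "m = 1"
    and vp: "\<forall>h\<in>invariance_grp (Gamma nu) (gammaL nu Qs). Fin h < nu [:of_nat (char_exp nu):]"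
  shows "\<forall>k\<in>Jset nu Qs m F. \<forall>l\<in>Bset nu Qs m F. k < l \<longrightarrow> char_exp nu dvd (l choose k)"
proof -
  have "\<forall>Q\<in>Qs. \<exists>Q'\<in>Qs. nu Q < nu Q'"
    using Qs_sub Psi_nomax Qs_cof by (meson less_le_trans subsetD)
  moreover have "Qs \<noteq> {}" using Psi_ne Qs_cof by blast
  ultimately interpret degree_one_limit nu Qs F
    using val Qs_sub m_eq F by unfold_locales simp_all
  have "0 \<in> invariance_grp (Gamma nu) (gammaL nu Qs)"
    by (auto simp: invariance_grp_def Gamma_def valgrp_K_def nsmul_def intro!: exI[of _ 1])
  then have "Fin 0 < nu [:of_nat (char_exp nu):]" using vp by blast
  then show ?thesis using char_exp_dvd_binomial m_eq by blast
qed

end
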